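(* Consider TOTATIVE. The nim-value of $n>1$ is the index of the smallest prime divisor of $n$, and $\mathcal{SG}(1)=0$.
   Context: TOTATIVE is the impartial normal-play game on the positive integers where from $n$ a player moves to a smaller relatively prime residue, i.e. to any $k$ with $1\le k<n$ and $\gcd(k,n)=1$; the player unable to move loses. $\mathcal{SG}$ (nim-value) denotes the Sprague-Grundy value (mex rule). Primes are indexed with $2$ having index $1$, $3$ index $2$, etc. *)

theory Defs
  imports "HOL-Computational_Algebra.Primes"
begin

definition mex :: "nat set \<Rightarrow> nat" where
  "mex A = (LEAST m. m \<notin> A)"

text \<open>Sprague-Grundy value of TOTATIVE (positions are positive integers;
  all moves decrease the position, so the recursion is well founded).\<close>
function totative_sg :: "nat \<Rightarrow> nat" where
  "totative_sg n = mex (totative_sg ` {k. 1 \<le> k \<and> k < n \<and> coprime k n})"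
  by auto
termination
  by (relation "measure id") auto

text \<open>Index of a prime: 2 has index 1, 3 has index 2, etc.\<close>
definition prime_index :: "nat \<Rightarrow> nat" where
  "prime_index p = card {q::nat. prime q \<and> q \<le> p}"

end

theory Submission
  imports Defs
begin

(* Strong induction on n > 1, with p the least prime factor of n; the moves from n go to
   the totatives k < n.  The totative 1 has value 0 and every prime q < p is a
   totative (it cannot divide n), so by induction all values 1, ..., prime_index p - 1 occur.
   The value prime_index p does not occur: a totative k > 1 with that value would have least
   prime factor p by induction, and p would then divide both k and n. *)

lemma mex_eqI:
  assumes "i \<notin> A" and "{..<i} \<subseteq> A"
  shows "mex A = i"
  unfolding mex_def
proof (rule Least_equality)
  show "i \<notin> A" by fact
  show "i \<le> j" if "j \<notin> A" for j
    using that assms(2) by (meson lessThan_iff not_le subsetD)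
qed

lemma prime_index_mono: "q \<le> p \<Longrightarrow> prime_index q \<le> prime_index p"
  unfolding prime_index_def by (rule card_mono) auto

lemma prime_index_pos: "prime p \<Longrightarrow> 0 < prime_index p"
  unfolding prime_index_def by (subst card_gt_0_iff) auto

lemma prime_index_strict_mono:
  assumes "prime p" and "q < p"
  shows "prime_index q < prime_index p"
  unfolding prime_index_def
proof (rule psubset_card_mono)
  have "{r. prime r \<and> r \<le> q} \<subseteq> {r. prime r \<and> r \<le> p}"
    using assms by auto
  moreover have "p \<in> {r. prime r \<and> r \<le> p} - {r. prime r \<and> r \<le> q}"
    using assms by auto
  ultimately show "{r. prime r \<and> r \<le> q} \<subset> {r. prime r \<and> r \<le> p}"
    by blast
qed auto

lemma inj_on_prime_index: "inj_on prime_index {p. prime p}"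
  by (rule inj_onI) (metis mem_Collect_eq linorder_neqE_nat prime_index_strict_mono less_irrefl)

lemma prime_index_image_primes_atMost:
  "prime_index ` {q. prime q \<and> q \<le> p} = {1..prime_index p}"
proof (rule card_subset_eq)
  show "prime_index ` {q. prime q \<and> q \<le> p} \<subseteq> {1..prime_index p}"
    using prime_index_pos prime_index_mono by (auto simp: Suc_le_eq)
  have "inj_on prime_index {q. prime q \<and> q \<le> p}"
    using inj_on_prime_index by (rule inj_on_subset) auto
  then show "card (prime_index ` {q. prime q \<and> q \<le> p}) = card {1..prime_index p}"
    by (simp only: card_image) (simp add: prime_index_def)
qed simp

lemma
  fixes n :: nat
  assumes "n > 1"
  shows prime_Min_prime_factors: "prime (Min (prime_factors n))"
    and Min_prime_factors_dvd: "Min (prime_factors n) dvd n"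
    and Min_prime_factors_le: "prime q \<Longrightarrow> q dvd n \<Longrightarrow> Min (prime_factors n) \<le> q"
proof -
  obtain r :: nat where "prime r" "r dvd n"
    using prime_factor_nat[of n] assms by auto
  then have "r \<in> prime_factors n"
    using assms by (simp add: in_prime_factors_iff)
  then have "prime_factors n \<noteq> {}"
    by blast
  then have "Min (prime_factors n) \<in> prime_factors n" by simp
  then show "prime (Min (prime_factors n))" "Min (prime_factors n) dvd n" by auto
  show "Min (prime_factors n) \<le> q" if "prime q" "q dvd n"
    using that assms by (simp add: in_prime_factors_iff)
qed

declare totative_sg.simps [simp del]

definition totative_moves :: "nat \<Rightarrow> nat set" where
  "totative_moves n = {k. 1 \<le> k \<and> k < n \<and> coprime k n}"

lemma totative_sg_eq_mex: "totative_sg n = mex (totative_sg ` totative_moves n)"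
  unfolding totative_moves_def by (rule totative_sg.simps)

lemma totative_sg_one: "totative_sg 1 = 0"
proof -
  have "totative_moves 1 = {}"
    by (auto simp: totative_moves_def)
  then show ?thesis
    unfolding totative_sg_eq_mex[of 1] by (simp add: mex_def)
qed

lemma one_in_totative_moves: "n > 1 \<Longrightarrow> 1 \<in> totative_moves n"
  by (simp add: totative_moves_def)

lemma prime_in_totative_moves:
  assumes "n > 1" and "prime q" and "q < Min (prime_factors n)"
  shows "q \<in> totative_moves n"
proof -
  have "\<not> q dvd n"
    using assms Min_prime_factors_le[of n q] by auto
  then have "coprime q n"
    by (rule prime_imp_coprime[OF \<open>prime q\<close>])
  moreover have "Min (prime_factors n) \<le> n"
    using Min_prime_factors_dvd[OF \<open>n > 1\<close>] \<open>n > 1\<close> by (simp add: dvd_imp_le)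
  then have "q < n"
    using \<open>q < Min (prime_factors n)\<close> by simp
  ultimately show ?thesis
    using prime_gt_1_nat[OF \<open>prime q\<close>] by (simp add: totative_moves_def)
qed

context
  fixes n :: nat
  assumes n: "n > 1"
    and IH: "\<And>k. 1 < k \<Longrightarrow> k < n \<Longrightarrow> totative_sg k = prime_index (Min (prime_factors k))"
begin

lemma prime_index_Min_prime_factors_notin_move_values:
  "prime_index (Min (prime_factors n)) \<notin> totative_sg ` totative_moves n"
proof
  let ?p = "Min (prime_factors n)"
  assume "prime_index ?p \<in> totative_sg ` totative_moves n"
  then obtain k where val: "prime_index ?p = totative_sg k" and k: "k \<in> totative_moves n"
    by (rule imageE)
  have "k \<noteq> 1"
    using val totative_sg_one prime_index_pos[OF prime_Min_prime_factors[OF n]] by auto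
  with k have "1 < k" "k < n" "coprime k n"
    by (auto simp: totative_moves_def)
  then have "prime_index (Min (prime_factors k)) = prime_index ?p"
    using IH val by simp
  then have "Min (prime_factors k) = ?p"
    using inj_on_prime_index prime_Min_prime_factors[OF n] prime_Min_prime_factors[OF \<open>1 < k\<close>]
    by (auto dest: inj_onD)
  then have "?p dvd k"
    using Min_prime_factors_dvd[OF \<open>1 < k\<close>] by simp
  then have "is_unit ?p"
    using \<open>coprime k n\<close> Min_prime_factors_dvd[OF n] coprime_common_divisor by blast
  then show False
    using prime_Min_prime_factors[OF n] by simp
qed

lemma lessThan_prime_index_Min_prime_factors_subset_move_values:
  "{..<prime_index (Min (prime_factors n))} \<subseteq> totative_sg ` totative_moves n"
proof
  let ?p = "Min (prime_factors n)"
  fix j assume j: "j \<in> {..<prime_index ?p}"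
  show "j \<in> totative_sg ` totative_moves n"
  proof (cases "j = 0")
    case True
    then show ?thesis
      using one_in_totative_moves[OF n] totative_sg_one by (metis image_eqI)
  next
    case False
    with j have "j \<in> prime_index ` {q. prime q \<and> q \<le> ?p}"
      by (simp add: prime_index_image_primes_atMost)
    then obtain q where q: "prime q" "q \<le> ?p" and "j = prime_index q"
      by blast
    with j have "q < ?p" by (metis le_neq_implies_less lessThan_iff less_irrefl)
    then have "q \<in> totative_moves n"
      by (rule prime_in_totative_moves[OF n \<open>prime q\<close>])
    moreover have "totative_sg q = j"
    proof -
      have "1 < q" "q < n"
        using prime_gt_1_nat[OF \<open>prime q\<close>] \<open>q \<in> totative_moves n\<close>
        by (auto simp: totative_moves_def)
      moreover have "Min (prime_factors q) = q"
        using prime_prime_factors[OF \<open>prime q\<close>] by simp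
      ultimately show ?thesis
        using IH \<open>j = prime_index q\<close> by simp
    qed
    ultimately show ?thesis by blast
  qed
qed

end

lemma totative_sg_eq_prime_index:
  "n > 1 \<Longrightarrow> totative_sg n = prime_index (Min (prime_factors n))"
proof (induction n rule: less_induct)
  case (less n)
  have IH: "\<And>k. 1 < k \<Longrightarrow> k < n \<Longrightarrow> totative_sg k = prime_index (Min (prime_factors k))"
    using less.IH by blast
  have "mex (totative_sg ` totative_moves n) = prime_index (Min (prime_factors n))"
    using prime_index_Min_prime_factors_notin_move_values[OF less.prems IH]
      lessThan_prime_index_Min_prime_factors_subset_move_values[OF less.prems IH]
    by (rule mex_eqI)
  then show ?case
    by (simp only: totative_sg_eq_mex[of n])
qed

theorem mainTheorem6:
  shows "totative_sg 1 = 0 \<and>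
    (\<forall>n::nat. n > 1 \<longrightarrow> totative_sg n = prime_index (Min (prime_factors n)))"
  using totative_sg_one totative_sg_eq_prime_index by blast

end
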